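(* Run Algorithm 1 with sample size $pn=\frac{n}{e}$, and let $T$ be the set of all tentatively selected items, i.e. the set of items $j$ that arrive in some round $\ell\ge\lceil n/e\rceil$ and satisfy $j\in\mathcal{A}(U^{\le \ell})$ (regardless of whether they are accepted). Then $\mathbb{E}[v(T)]\ge\left(\frac{\alpha}{e}-\frac{\alpha}{n}\right)v(\mathrm{OPT})$.
   Context: Submodular secretary setting. Let $U$ be a finite ground set of $n$ items and $k\ge1$ an integer. Let $v\colon 2^U\to\mathbb{R}_{\ge0}$ be monotone ($S\subseteq T\Rightarrow v(S)\le v(T)$) and submodular ($v(S\cup\{x\})-v(S)\ge v(T\cup\{x\})-v(T)$ for all $S\subseteq T\subseteq U$, $x\in U\setminus T$). Let $\mathrm{OPT}\in\arg\max\{v(S): S\subseteq U, |S|\le k\}$. The items arrive one per round (rounds $1,\dots,n$) in a uniformly random order; for $\ell\in[n]$, $U^{\le \ell}$ denotes the set of items arriving in rounds $1,\dots,\ell$. $\mathcal{A}$ is an offline algorithm that, for every $L\subseteq U$, returns a set $\mathcal{A}(L)\subseteq L$ with $|\mathcal{A}(L)|\le k$ and $v(\mathcal{A}(L))\ge \alpha\max\{v(T):T\subseteq L,|T|\le k\}$, where $\alpha\in(0,1]$; the output $\mathcal{A}(L)$ depends only on the set $L$ (not on the arrival order). Algorithm 1 with sample size $pn$: it rejects the items arriving in rounds $1,\dots,\lceil pn\rceil-1$; in each round $\ell\ge\lceil pn\rceil$, with arriving item $j$, it computes $S^{(\ell)}=\mathcal{A}(U^{\le\ell})$; $j$ is called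 tentatively selected if $j\in S^{(\ell)}$; if $j$ is tentatively selected and fewer than $k$ items have been accepted so far, $j$ is accepted, otherwise rejected. *)

theory Defs
  imports Complex_Main "HOL-Combinatorics.Multiset_Permutations"
begin

text \<open>An arrival order of the ground set U is a list xs enumerating U without repetition;
  the item arriving in round l (1 \<le> l \<le> n) is xs ! (l - 1), and the set of items
  arriving in rounds 1..l is set (take l xs).\<close>

definition tentative_set :: "('a set \<Rightarrow> 'a set) \<Rightarrow> nat \<Rightarrow> 'a list \<Rightarrow> 'a set" where
  "tentative_set A t xs =
     {xs ! (l - 1) | l. 1 \<le> l \<and> t \<le> l \<and> l \<le> length xs \<and> xs ! (l - 1) \<in> A (set (take l xs))}"

definition exp_random_order :: "'a set \<Rightarrow> ('a list \<Rightarrow> real) \<Rightarrow> real" where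
  "exp_random_order U f =
     (\<Sum>xs\<in>permutations_of_set U. f xs) / real (card (permutations_of_set U))"

end

theory Submission
  imports Defs
begin

text \<open>
  Reveal the arrival order backwards. Given the set L of the first m arrivals, the item j arriving
  in round m is uniform in L and the order of L - {j} is uniformly random; j is tentatively selected
  iff j \<in> A(L). For a set W of items added later, submodularity gives, averaged over j,
  v(W \<union> ({j} \<inter> A L)) \<ge> (1 - 1/m) v W + (\<alpha>/m) v(OPT \<inter> L) and
  v(OPT \<inter> L - {j}) \<ge> (1 - 1/m) v(OPT \<inter> L). Induction on m yields
  E[v(W \<union> T)] \<ge> ((t-1)/m) v W + \<alpha> ((t-1)/m) (\<Sum>i=t-1..m-1. 1/i) v(OPT \<inter> L),
  whose last coefficient is the success probability of the classical secretary rule; for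
  t = \<lceil>n/e\<rceil> the harmonic sum is at least ln(n/(t-1)) \<ge> 1.
\<close>

lemma exp_random_order_empty [simp]: "exp_random_order {} f = f []"
  by (simp add: exp_random_order_def)

lemma exp_random_order_cong:
  "(\<And>xs. xs \<in> permutations_of_set L \<Longrightarrow> f xs = g xs) \<Longrightarrow> exp_random_order L f = exp_random_order L g"
  unfolding exp_random_order_def by simp

lemma permutations_of_set_snoc:
  assumes "L \<noteq> {}"
  shows "permutations_of_set L = (\<Union>j\<in>L. (\<lambda>ys. ys @ [j]) ` permutations_of_set (L - {j}))"
proof -
  have "permutations_of_set L = rev ` permutations_of_set L" by simp
  also have "\<dots> = (\<Union>j\<in>L. rev ` Cons j ` permutations_of_set (L - {j}))"
    by (subst permutations_of_set_nonempty[OF assms]) (simp add: image_UN)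
  also have "\<dots> = (\<Union>j\<in>L. (\<lambda>ys. ys @ [j]) ` rev ` permutations_of_set (L - {j}))"
    by (simp only: image_image rev.simps)
  finally show ?thesis by simp
qed

lemma sum_permutations_of_set_snoc:
  assumes "finite L" "L \<noteq> {}"
  shows "(\<Sum>xs\<in>permutations_of_set L. f xs) =
         (\<Sum>j\<in>L. \<Sum>ys\<in>permutations_of_set (L - {j}). f (ys @ [j]))"
  unfolding permutations_of_set_snoc[OF assms(2)]
  using assms(1) by (subst sum.UNION_disjoint) (auto simp: sum.reindex inj_on_def)

lemma exp_random_order_snoc:
  assumes "finite L" "L \<noteq> {}"
  shows "exp_random_order L f =
         (\<Sum>j\<in>L. exp_random_order (L - {j}) (\<lambda>ys. f (ys @ [j]))) / real (card L)"
proof -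
  have "card L > 0" using assms by (simp add: card_gt_0_iff)
  then have "(fact (card L) :: real) = real (card L) * fact (card L - 1)"
    by (simp add: fact_reduce)
  moreover have "card (L - {j}) = card L - 1" if "j \<in> L" for j
    using that assms(1) by simp
  ultimately show ?thesis
    unfolding exp_random_order_def sum_permutations_of_set_snoc[OF assms]
    using assms(1) by (simp add: sum_divide_distrib field_simps)
qed

lemma tentative_set_conv_nth:
  "tentative_set A t xs =
     {xs ! i | i. t \<le> Suc i \<and> i < length xs \<and> xs ! i \<in> A (set (take (Suc i) xs))}"
proof -
  have "(\<exists>l. x = xs ! (l - 1) \<and> 1 \<le> l \<and> t \<le> l \<and> l \<le> length xs
          \<and> xs ! (l - 1) \<in> A (set (take l xs)))
    \<longleftrightarrow> (\<exists>i. x = xs ! i \<and> t \<le> Suc i \<and> i < length xs \<and> xs ! i \<in> A (set (take (Suc i) xs)))"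
    (is "?round \<longleftrightarrow> ?index") for x
  proof
    assume ?round
    then obtain l where "x = xs ! (l - 1)" "1 \<le> l" "t \<le> l" "l \<le> length xs"
        "xs ! (l - 1) \<in> A (set (take l xs))"
      by blast
    then show ?index by (intro exI[of _ "l - 1"]) simp
  next
    assume ?index
    then obtain i where "x = xs ! i" "t \<le> Suc i" "i < length xs" "xs ! i \<in> A (set (take (Suc i) xs))"
      by blast
    then show ?round by (intro exI[of _ "Suc i"]) simp
  qed
  then show ?thesis unfolding tentative_set_def by blast
qed

lemma tentative_set_Nil [simp]: "tentative_set A t [] = {}"
  by (simp add: tentative_set_conv_nth)

lemma mem_tentative_set_snoc:
  "x \<in> tentative_set A t (ys @ [j]) \<longleftrightarrow>
     x \<in> tentative_set A t ys \<or> (x = j \<and> t \<le> Suc (length ys) \<and> j \<in> A (insert j (set ys)))"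
proof
  assume "x \<in> tentative_set A t (ys @ [j])"
  then obtain i where i: "x = (ys @ [j]) ! i" "t \<le> Suc i" "i < Suc (length ys)"
      "(ys @ [j]) ! i \<in> A (set (take (Suc i) (ys @ [j])))"
    unfolding tentative_set_conv_nth by auto
  show "x \<in> tentative_set A t ys \<or> (x = j \<and> t \<le> Suc (length ys) \<and> j \<in> A (insert j (set ys)))"
  proof (cases "i < length ys")
    case True
    with i have "x \<in> tentative_set A t ys"
      unfolding tentative_set_conv_nth by (auto simp: nth_append)
    then show ?thesis ..
  next
    case False
    with i show ?thesis by (simp add: less_Suc_eq)
  qed
next
  assume "x \<in> tentative_set A t ys \<or> (x = j \<and> t \<le> Suc (length ys) \<and> j \<in> A (insert j (set ys)))"
  then show "x \<in> tentative_set A t (ys @ [j])"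
  proof
    assume "x \<in> tentative_set A t ys"
    then obtain i where "x = ys ! i" "t \<le> Suc i" "i < length ys" "ys ! i \<in> A (set (take (Suc i) ys))"
      unfolding tentative_set_conv_nth by auto
    then show ?thesis
      unfolding tentative_set_conv_nth by (auto simp: nth_append intro!: exI[of _ i])
  next
    assume "x = j \<and> t \<le> Suc (length ys) \<and> j \<in> A (insert j (set ys))"
    then show ?thesis
      unfolding tentative_set_conv_nth by (auto intro!: exI[of _ "length ys"])
  qed
qed

lemma tentative_set_snoc:
  "tentative_set A t (ys @ [j]) =
     (if t \<le> Suc (length ys) then tentative_set A t ys \<union> ({j} \<inter> A (insert j (set ys)))
      else tentative_set A t ys)"
  by (auto simp: mem_tentative_set_snoc)

lemma tentative_set_snoc_permutation:
  assumes "finite L" "j \<in> L" "ys \<in> permutations_of_set (L - {j})"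
  shows "tentative_set A t (ys @ [j]) =
           tentative_set A t ys \<union> (if t \<le> card L then {j} \<inter> A L else {})"
proof -
  have "Suc (length ys) = card L"
    using length_finite_permutations_of_set[OF assms(3)] card_Suc_Diff1[OF assms(1,2)] by simp
  moreover have "insert j (set ys) = L"
    using permutations_of_setD(1)[OF assms(3)] assms(2) by auto
  ultimately show ?thesis by (simp add: tentative_set_snoc)
qed

lemma ln_diff_le_sum_inverse:
  assumes "0 < a" "a \<le> b"
  shows "ln (real b) - ln (real a) \<le> (\<Sum>i = a..<b. 1 / real i)"
proof -
  have "ln (real b) - ln (real a) = (\<Sum>i = a..<b. ln (real (Suc i)) - ln (real i))"
    using sum_Suc_diff'[OF assms(2), of "\<lambda>i. ln (real i)"] by simp
  also have "\<dots> \<le> (\<Sum>i = a..<b. 1 / real i)"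
  proof (rule sum_mono)
    fix i assume "i \<in> {a..<b}"
    then have "0 < real i" using assms(1) by simp
    then have "1 + 1 / real i = real (Suc i) / real i" by (simp add: field_simps)
    with \<open>0 < real i\<close> have "ln (real (Suc i)) - ln (real i) = ln (1 + 1 / real i)"
      by (simp add: ln_div)
    also have "\<dots> \<le> 1 / real i" by (rule ln_add_one_self_le_self) simp
    finally show "ln (real (Suc i)) - ln (real i) \<le> 1 / real i" .
  qed
  finally show ?thesis .
qed

text \<open>For t \<le> m, sample_ratio t m = (t-1)/m is the product of the factors (l-1)/l over the
  rounds l = t..m in which a selection can happen.\<close>

definition sample_ratio :: "nat \<Rightarrow> nat \<Rightarrow> real" where
  "sample_ratio t m = (if m < t then 1 else real (t - 1) / real m)"

definition secretary_ratio :: "nat \<Rightarrow> nat \<Rightarrow> real" where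
  "secretary_ratio t m = sample_ratio t m * (\<Sum>i = t - 1..<m. 1 / real i)"

lemma sample_ratio_nonneg: "0 \<le> sample_ratio t m"
  by (simp add: sample_ratio_def)

lemma secretary_ratio_nonneg: "0 \<le> secretary_ratio t m"
  by (simp add: secretary_ratio_def sample_ratio_nonneg sum_nonneg)

lemma sample_ratio_before: "m < t \<Longrightarrow> sample_ratio t m = 1"
  by (simp add: sample_ratio_def)

lemma secretary_ratio_before: "m < t \<Longrightarrow> secretary_ratio t m = 0"
  by (simp add: secretary_ratio_def)

lemma sample_ratio_Suc:
  assumes "t \<le> Suc m"
  shows "real (Suc m) * sample_ratio t (Suc m) = real m * sample_ratio t m"
  using assms by (cases "m < t") (auto simp: sample_ratio_def)

lemma secretary_ratio_Suc:
  assumes "t \<le> Suc m"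
  shows "real (Suc m) * secretary_ratio t (Suc m) \<le> sample_ratio t m + real m * secretary_ratio t m"
proof -
  have "(\<Sum>i = t - 1..<Suc m. 1 / real i) = (\<Sum>i = t - 1..<m. 1 / real i) + 1 / real m"
    using assms by (subst sum.atLeastLessThan_Suc) auto
  then have "real (Suc m) * secretary_ratio t (Suc m) =
        real m * sample_ratio t m * ((\<Sum>i = t - 1..<m. 1 / real i) + 1 / real m)"
    unfolding secretary_ratio_def sample_ratio_Suc[OF assms, symmetric] by (simp only: mult.assoc)
  also have "\<dots> = real m * secretary_ratio t m + real m * sample_ratio t m / real m"
    by (simp add: secretary_ratio_def algebra_simps)
  also have "real m * sample_ratio t m / real m \<le> sample_ratio t m"
    by (simp add: sample_ratio_nonneg)
  finally show ?thesis by simp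
qed

lemma secretary_ratio_ceiling_ge:
  assumes "0 < n" and t: "t = nat \<lceil>real n / exp 1\<rceil>"
  shows "1 / exp 1 - 1 / real n \<le> secretary_ratio t n"
proof (cases "t \<le> 1")
  case True
  then have "real n \<le> exp 1" using t by (simp add: divide_le_eq)
  then have "1 / exp 1 \<le> 1 / real n" using assms(1) by (simp add: frac_le)
  then show ?thesis using secretary_ratio_nonneg[of t n] by linarith
next
  case False
  have "real t = of_int \<lceil>real n / exp 1\<rceil>" using t by simp
  then have t_bounds: "real n / exp 1 \<le> real t" "real t < real n / exp 1 + 1"
    using ceiling_correct[of "real n / exp 1"] by linarith+
  have "real n / exp 1 < real n" using assms(1) by (simp add: divide_less_eq)
  with t_bounds False have "2 \<le> t" "t \<le> n" by linarith+
  have "1 \<le> ln (real n) - ln (real (t - 1))"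
  proof -
    have "exp 1 * real (t - 1) < real n"
      using t_bounds \<open>2 \<le> t\<close> by (simp add: of_nat_diff field_simps)
    then have "exp 1 \<le> real n / real (t - 1)"
      using \<open>2 \<le> t\<close> by (simp add: field_simps)
    then have "1 \<le> ln (real n / real (t - 1))"
      using \<open>2 \<le> t\<close> assms(1) by (simp add: ln_ge_iff)
    then show ?thesis using \<open>2 \<le> t\<close> assms(1) by (simp add: ln_div)
  qed
  also have "\<dots> \<le> (\<Sum>i = t - 1..<n. 1 / real i)"
    using \<open>2 \<le> t\<close> \<open>t \<le> n\<close> by (intro ln_diff_le_sum_inverse) auto
  finally have harmonic: "1 \<le> (\<Sum>i = t - 1..<n. 1 / real i)" .
  have "1 / exp 1 - 1 / real n \<le> real (t - 1) / real n"
    using t_bounds \<open>2 \<le> t\<close> assms(1) by (simp add: of_nat_diff field_simps)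
  also have "\<dots> \<le> real (t - 1) / real n * (\<Sum>i = t - 1..<n. 1 / real i)"
    using mult_left_mono[OF harmonic, of "real (t - 1) / real n"] by simp
  also have "\<dots> = secretary_ratio t n"
    using \<open>2 \<le> t\<close> \<open>t \<le> n\<close> by (simp add: secretary_ratio_def sample_ratio_def)
  finally show ?thesis .
qed

locale monotone_submodular =
  fixes U :: "'a set" and v :: "'a set \<Rightarrow> real"
  assumes nonneg: "S \<subseteq> U \<Longrightarrow> 0 \<le> v S"
    and mono: "S \<subseteq> T \<Longrightarrow> T \<subseteq> U \<Longrightarrow> v S \<le> v T"
    and submodular: "S \<subseteq> T \<Longrightarrow> T \<subseteq> U \<Longrightarrow> x \<in> U - T \<Longrightarrow>
                       v (insert x S) - v S \<ge> v (insert x T) - v T"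
begin

lemma marginal_le_sum_marginals:
  assumes "finite B" "B \<subseteq> U" "W \<subseteq> U" "B \<inter> W = {}"
  shows "v (W \<union> B) - v W \<le> (\<Sum>j\<in>B. v (insert j W) - v W)"
  using assms
proof (induction B rule: finite_induct)
  case empty
  then show ?case by simp
next
  case (insert b B)
  have "v (insert b (W \<union> B)) - v (W \<union> B) \<le> v (insert b W) - v W"
    using insert.prems insert.hyps by (intro submodular) auto
  with insert show ?case by simp
qed

lemma sum_removal_marginals_le:
  assumes "finite B" "B \<subseteq> U"
  shows "(\<Sum>j\<in>B. v B - v (B - {j})) \<le> v B - v {}"
  using assms
proof (induction B rule: finite_induct)
  case empty
  then show ?case by simp
next
  case (insert b B)
  have "v (insert b B) - v (insert b B - {j}) \<le> v B - v (B - {j})" if "j \<in> B" for j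
  proof -
    have "v (insert j (insert b B - {j})) - v (insert b B - {j}) \<le> v (insert j (B - {j})) - v (B - {j})"
      using insert that by (intro submodular) auto
    moreover have "insert j (insert b B - {j}) = insert b B" "insert j (B - {j}) = B"
      using that by auto
    ultimately show ?thesis by simp
  qed
  then have "(\<Sum>j\<in>B. v (insert b B) - v (insert b B - {j})) \<le> (\<Sum>j\<in>B. v B - v (B - {j}))"
    by (rule sum_mono)
  with insert show ?case by simp
qed

lemma sum_remove_one_ge:
  assumes "finite L" "B \<subseteq> L" "L \<subseteq> U"
  shows "(real (card L) - 1) * v B \<le> (\<Sum>j\<in>L. v (B - {j}))"
proof -
  have "finite B" using assms finite_subset by blast
  have "(\<Sum>j\<in>L. v (B - {j})) = (\<Sum>j\<in>L - B. v (B - {j})) + (\<Sum>j\<in>B. v (B - {j}))"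
    by (rule sum.subset_diff[OF assms(2,1)])
  also have "(\<Sum>j\<in>L - B. v (B - {j})) = real (card (L - B)) * v B"
    by simp
  also have "card (L - B) = card L - card B"
    using \<open>finite B\<close> assms(2) by (rule card_Diff_subset)
  also have "real (card L - card B) = real (card L) - real (card B)"
    using card_mono[OF assms(1,2)] by (rule of_nat_diff)
  finally have "(\<Sum>j\<in>L. v (B - {j})) =
      (real (card L) - real (card B)) * v B + (\<Sum>j\<in>B. v (B - {j}))" .
  moreover have "real (card B) * v B - (\<Sum>j\<in>B. v (B - {j})) \<le> v B - v {}"
    using sum_removal_marginals_le[OF \<open>finite B\<close>] assms by (simp add: sum_subtractf)
  moreover have "0 \<le> v {}" by (rule nonneg) simp
  ultimately show ?thesis by (simp add: algebra_simps)
qed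

lemma sum_add_selected_ge:
  assumes "finite L" "L \<subseteq> U" "W \<subseteq> U" "W \<inter> L = {}" "S \<subseteq> L"
  shows "(real (card L) - 1) * v W + v S \<le> (\<Sum>j\<in>L. v (W \<union> ({j} \<inter> S)))"
proof -
  have "finite S" using assms finite_subset by blast
  have "(\<Sum>j\<in>L. v (W \<union> ({j} \<inter> S))) = (\<Sum>j\<in>L. v W + (if j \<in> S then v (insert j W) - v W else 0))"
    by (rule sum.cong) auto
  also have "\<dots> = real (card L) * v W + (\<Sum>j\<in>L \<inter> S. v (insert j W) - v W)"
    using assms(1) by (simp add: sum.distrib sum.inter_restrict)
  also have "L \<inter> S = S" using assms(5) by blast
  finally have "(\<Sum>j\<in>L. v (W \<union> ({j} \<inter> S))) =
      real (card L) * v W + (\<Sum>j\<in>S. v (insert j W) - v W)" .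
  moreover have "v (W \<union> S) - v W \<le> (\<Sum>j\<in>S. v (insert j W) - v W)"
    using assms \<open>finite S\<close> by (intro marginal_le_sum_marginals) auto
  moreover have "v S \<le> v (W \<union> S)" using assms by (intro mono) auto
  ultimately show ?thesis by (simp add: algebra_simps)
qed

end

locale approximation_oracle = monotone_submodular U v
  for U :: "'a set" and v :: "'a set \<Rightarrow> real" +
  fixes k :: nat and A :: "'a set \<Rightarrow> 'a set" and \<alpha> :: real
  assumes finite_ground: "finite U"
    and alpha_pos: "0 < \<alpha>"
    and oracle_subset: "L \<subseteq> U \<Longrightarrow> A L \<subseteq> L"
    and oracle_approx: "L \<subseteq> U \<Longrightarrow> S \<subseteq> L \<Longrightarrow> card S \<le> k \<Longrightarrow> \<alpha> * v S \<le> v (A L)"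
begin

lemma round_gain_ge:
  assumes "L \<subseteq> U" "card L = Suc m" "W \<subseteq> U" "W \<inter> L = {}" "B \<subseteq> L" "card B \<le> k"
  shows "real (Suc m) * (sample_ratio t (Suc m) * v W + \<alpha> * secretary_ratio t (Suc m) * v B)
         \<le> sample_ratio t m * (\<Sum>j\<in>L. v (W \<union> (if t \<le> Suc m then {j} \<inter> A L else {})))
           + \<alpha> * secretary_ratio t m * (real m * v B)"
proof (cases "t \<le> Suc m")
  case True
  have "finite L" using finite_ground assms(1) finite_subset by blast
  have "v B \<ge> 0" using assms by (intro nonneg) auto
  have "real m * v W + \<alpha> * v B \<le> (\<Sum>j\<in>L. v (W \<union> ({j} \<inter> A L)))"
    using sum_add_selected_ge[OF \<open>finite L\<close> assms(1,3,4) oracle_subset[OF assms(1)]]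
      oracle_approx[OF assms(1,5,6)] assms(2) by simp
  then have selected: "sample_ratio t m * (real m * v W + \<alpha> * v B)
      \<le> sample_ratio t m * (\<Sum>j\<in>L. v (W \<union> ({j} \<inter> A L)))"
    by (rule mult_left_mono) (rule sample_ratio_nonneg)
  have "real (Suc m) * secretary_ratio t (Suc m) * v B
      \<le> (sample_ratio t m + real m * secretary_ratio t m) * v B"
    using secretary_ratio_Suc[OF True] \<open>v B \<ge> 0\<close> by (rule mult_right_mono)
  then have "\<alpha> * (real (Suc m) * secretary_ratio t (Suc m) * v B)
      \<le> \<alpha> * ((sample_ratio t m + real m * secretary_ratio t m) * v B)"
    using alpha_pos by simp
  then have "real (Suc m) * (sample_ratio t (Suc m) * v W + \<alpha> * secretary_ratio t (Suc m) * v B)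
      \<le> sample_ratio t m * (real m * v W + \<alpha> * v B) + \<alpha> * secretary_ratio t m * (real m * v B)"
    using sample_ratio_Suc[OF True] by (simp add: algebra_simps)
  with selected True show ?thesis by simp
next
  case False
  then show ?thesis
    using assms(2) by (simp add: sample_ratio_before secretary_ratio_before)
qed

text \<open>W stands for the items tentatively selected in the rounds after those of L.\<close>

lemma exp_tentative_value_ge:
  assumes "L \<subseteq> U" "W \<subseteq> U" "W \<inter> L = {}" "F \<subseteq> U" "card F \<le> k"
  shows "sample_ratio t (card L) * v W + \<alpha> * secretary_ratio t (card L) * v (F \<inter> L)
         \<le> exp_random_order L (\<lambda>xs. v (W \<union> tentative_set A t xs))"
  using assms(1-3)
proof (induction "card L" arbitrary: L W)
  case 0
  then have "L = {}" using finite_ground finite_subset by fastforce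
  then show ?case
    using nonneg[OF \<open>W \<subseteq> U\<close>] by (simp add: sample_ratio_def secretary_ratio_def)
next
  case (Suc m L W)
  define X where "X j = (if t \<le> Suc m then {j} \<inter> A L else {})" for j
  define B where "B = F \<inter> L"
  have "finite L" using finite_ground Suc.prems(1) finite_subset by blast
  have "L \<noteq> {}" using Suc.hyps(2) by auto
  have "card B \<le> k"
    using card_mono[of F B] finite_subset[OF assms(4) finite_ground] assms(5) by (auto simp: B_def)
  have IH: "sample_ratio t m * v (W \<union> X j) + \<alpha> * secretary_ratio t m * v (B - {j})
      \<le> exp_random_order (L - {j}) (\<lambda>ys. v (W \<union> tentative_set A t (ys @ [j])))"
    if "j \<in> L" for j
  proof -
    have "exp_random_order (L - {j}) (\<lambda>ys. v (W \<union> tentative_set A t (ys @ [j])))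
        = exp_random_order (L - {j}) (\<lambda>ys. v ((W \<union> X j) \<union> tentative_set A t ys))"
      using tentative_set_snoc_permutation[OF \<open>finite L\<close> that] Suc.hyps(2)
      by (intro exp_random_order_cong) (simp add: X_def Un_ac)
    moreover have "card (L - {j}) = m" "F \<inter> (L - {j}) = B - {j}"
      using Suc.hyps(2) \<open>finite L\<close> that by (auto simp: B_def)
    moreover have "W \<union> X j \<subseteq> U" "(W \<union> X j) \<inter> (L - {j}) = {}"
      using Suc.prems oracle_subset[OF Suc.prems(1)] by (auto simp: X_def)
    ultimately show ?thesis
      using Suc.hyps(1)[of "L - {j}" "W \<union> X j"] Suc.prems(1) by auto
  qed
  have "real (Suc m) * (sample_ratio t (Suc m) * v W + \<alpha> * secretary_ratio t (Suc m) * v B)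
      \<le> sample_ratio t m * (\<Sum>j\<in>L. v (W \<union> X j)) + \<alpha> * secretary_ratio t m * (real m * v B)"
    unfolding X_def using Suc.prems Suc.hyps(2) \<open>card B \<le> k\<close>
    by (intro round_gain_ge) (auto simp: B_def)
  also have "\<dots> \<le> sample_ratio t m * (\<Sum>j\<in>L. v (W \<union> X j))
      + \<alpha> * secretary_ratio t m * (\<Sum>j\<in>L. v (B - {j}))"
    using sum_remove_one_ge[OF \<open>finite L\<close> _ Suc.prems(1), of B] Suc.hyps(2)[symmetric]
      alpha_pos secretary_ratio_nonneg by (intro add_left_mono mult_left_mono) (auto simp: B_def)
  also have "\<dots> = (\<Sum>j\<in>L. sample_ratio t m * v (W \<union> X j) + \<alpha> * secretary_ratio t m * v (B - {j}))"
    by (simp add: sum.distrib sum_distrib_left)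
  also have "\<dots> \<le> (\<Sum>j\<in>L. exp_random_order (L - {j}) (\<lambda>ys. v (W \<union> tentative_set A t (ys @ [j]))))"
    using IH by (rule sum_mono)
  also have "\<dots> = real (Suc m) * exp_random_order L (\<lambda>xs. v (W \<union> tentative_set A t xs))"
    using exp_random_order_snoc[OF \<open>finite L\<close> \<open>L \<noteq> {}\<close>] Suc.hyps(2) by simp
  finally show ?case
    unfolding Suc.hyps(2)[symmetric] B_def
    by (simp only: mult_le_cancel_left_pos of_nat_0_less_iff zero_less_Suc)
qed

lemma exp_tentative_value_ge_secretary_ratio:
  assumes "F \<subseteq> U" "card F \<le> k"
  shows "\<alpha> * secretary_ratio t (card U) * v F
         \<le> exp_random_order U (\<lambda>xs. v (tentative_set A t xs))"
proof -
  have "sample_ratio t (card U) * v {} + \<alpha> * secretary_ratio t (card U) * v F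
      \<le> exp_random_order U (\<lambda>xs. v ({} \<union> tentative_set A t xs))"
    using exp_tentative_value_ge[of U "{}" F t] assms by (simp add: Int_absorb2)
  moreover have "0 \<le> sample_ratio t (card U) * v {}"
    using sample_ratio_nonneg nonneg[of "{}"] by simp
  ultimately show ?thesis by simp
qed

end

theorem mainTheorem2:
  fixes U :: "'a set" and k :: nat and v :: "'a set \<Rightarrow> real"
    and A :: "'a set \<Rightarrow> 'a set" and \<alpha> :: real and OPT :: "'a set"
  assumes finU: "finite U"
    and k_pos: "k \<ge> 1"
    and v_nonneg: "\<And>S. S \<subseteq> U \<Longrightarrow> v S \<ge> 0"
    and v_mono: "\<And>S T. S \<subseteq> T \<Longrightarrow> T \<subseteq> U \<Longrightarrow> v S \<le> v T"
    and v_submod: "\<And>S T x. S \<subseteq> T \<Longrightarrow> T \<subseteq> U \<Longrightarrow> x \<in> U - T \<Longrightarrow>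
                     v (insert x S) - v S \<ge> v (insert x T) - v T"
    and OPT_feas: "OPT \<subseteq> U" "card OPT \<le> k"
    and OPT_max: "\<And>S. S \<subseteq> U \<Longrightarrow> card S \<le> k \<Longrightarrow> v S \<le> v OPT"
    and alpha: "0 < \<alpha>" "\<alpha> \<le> 1"
    and A_sub: "\<And>L. L \<subseteq> U \<Longrightarrow> A L \<subseteq> L"
    and A_card: "\<And>L. L \<subseteq> U \<Longrightarrow> card (A L) \<le> k"
    and A_approx: "\<And>L S. L \<subseteq> U \<Longrightarrow> S \<subseteq> L \<Longrightarrow> card S \<le> k \<Longrightarrow> \<alpha> * v S \<le> v (A L)"
  shows "exp_random_order U
           (\<lambda>xs. v (tentative_set A (nat \<lceil>real (card U) / exp 1\<rceil>) xs))
         \<ge> (\<alpha> / exp 1 - \<alpha> / real (card U)) * v OPT"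
proof -
  interpret approximation_oracle U v k A \<alpha>
    by unfold_locales (fact v_nonneg v_mono v_submod finU alpha(1) A_sub A_approx)+
  define n where "n = card U"
  define t where "t = nat \<lceil>real n / exp 1\<rceil>"
  have "0 \<le> v OPT" using OPT_feas by (intro nonneg)
  show ?thesis
  proof (cases "n = 0")
    case True
    then have "U = {}" "OPT = {}" using finU OPT_feas by (auto simp: n_def)
    have "\<alpha> / exp 1 \<le> 1" using alpha exp_ge_add_one_self[of 1] by simp
    then have "\<alpha> / exp 1 * v {} \<le> v {}"
      using nonneg[of "{}"] alpha(1) by (intro mult_left_le_one_le) auto
    with \<open>U = {}\<close> \<open>OPT = {}\<close> show ?thesis by (simp add: n_def)
  next
    case False
    have "(\<alpha> / exp 1 - \<alpha> / real n) * v OPT \<le> \<alpha> * secretary_ratio t n * v OPT"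
      using secretary_ratio_ceiling_ge[OF _ t_def] False alpha(1) \<open>0 \<le> v OPT\<close>
      by (intro mult_right_mono) (auto simp: right_diff_distrib[symmetric] divide_inverse)
    also have "\<dots> \<le> exp_random_order U (\<lambda>xs. v (tentative_set A t xs))"
      using exp_tentative_value_ge_secretary_ratio[OF OPT_feas] by (simp add: n_def)
    finally show ?thesis by (simp add: n_def t_def)
  qed
qed

end
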